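(* There exists a transcendental entire function $f$ such that $f^{(s)}(\overline{\mathbb{Q}}) \subseteq \mathbb{Q}(i)$ for all integers $s \geq 0$.
   Context: $\overline{\mathbb{Q}}$ denotes the set of algebraic numbers in $\mathbb{C}$. A transcendental entire function is an entire function $\mathbb{C}\to\mathbb{C}$ that is not a polynomial. $f^{(s)}$ denotes the $s$-th derivative of $f$, with $f^{(0)}=f$. *)

theory Defs
  imports "HOL-Analysis.Analysis" "HOL-Computational_Algebra.Polynomial"
begin

definition gauss_rat :: "complex set" where
  "gauss_rat = {of_rat a + \<i> * of_rat b | a b. True}"

definition transcendental_entire :: "(complex \<Rightarrow> complex) \<Rightarrow> bool" where
  "transcendental_entire f \<longleftrightarrow> f holomorphic_on UNIV \<and> \<not> (\<exists>p. \<forall>z. f z = poly p z)"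

end

theory Submission
  imports Defs
begin

(* The function is an interpolation series F = sum_n c_n W_n with polynomials
   W_n = prod_{k<n} (X - b_k), where b_0, b_1, ... enumerates the algebraic numbers with
   every number repeated infinitely often. Step m prescribes the derivative of order
   s_m = #{k < m. b_k = b_m} at b_m: every later W_n vanishes there to order > s_m, so
   F^(s_m)(b_m) depends only on c_0, ..., c_m, and c_m can be chosen (by density of Q(i))
   both so small that the series and all its termwise derivatives converge locally
   uniformly, and so that F^(s_m)(b_m) lies in Q(i) - {0}. Since every pair (alpha, s) occurs
   as (b_m, s_m), this gives the inclusion for all derivatives; as the derivatives of every
   order at 0 are nonzero, F is not a polynomial. *)

(* The algebraic numbers are countable: each is a root of one of countably many
   nonzero integer polynomials, each of which has finitely many roots. *)
lemma countable_algebraic: "countable {x :: 'a :: field_char_0. algebraic x}"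
proof -
  define P where "P = {p :: 'a poly. (\<forall>i. coeff p i \<in> \<int>) \<and> p \<noteq> 0}"
  have "countable (\<int> :: 'a set)"
    unfolding Ints_def by simp
  moreover have "P \<subseteq> Poly ` lists \<int>"
  proof
    fix p assume "p \<in> P"
    then have "coeffs p \<in> lists \<int>"
      unfolding P_def by (auto simp: coeffs_def)
    then show "p \<in> Poly ` lists \<int>"
      by (metis Poly_coeffs image_eqI)
  qed
  ultimately have "countable P"
    by (meson countable_image countable_lists countable_subset)
  then have "countable (\<Union>p\<in>P. {x. poly p x = 0})"
    by (intro countable_UN) (auto simp: P_def intro: countable_finite poly_roots_finite)
  moreover have "{x. algebraic x} \<subseteq> (\<Union>p\<in>P. {x. poly p x = 0})"
    unfolding P_def algebraic_def by blast
  ultimately show ?thesis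
    by (rule countable_subset[rotated])
qed

lemma infinitely_repeating_enumeration:
  assumes "countable S"
  shows "\<exists>b :: nat \<Rightarrow> 'a. \<forall>x\<in>S. infinite {m. b m = x}"
proof
  define b where "b m = from_nat_into S (fst (prod_decode m))" for m
  show "\<forall>x\<in>S. infinite {m. b m = x}"
  proof
    fix x assume "x \<in> S"
    then obtain i where i: "from_nat_into S i = x"
      using from_nat_into_surj[OF assms] by blast
    have "range (\<lambda>j. prod_encode (i, j)) \<subseteq> {m. b m = x}"
      by (auto simp: b_def i)
    moreover have "infinite (range (\<lambda>j. prod_encode (i, j)))"
      by (rule range_inj_infinite) (auto simp: inj_def)
    ultimately show "infinite {m. b m = x}"
      using finite_subset by blast
  qed
qed

(* A value taken infinitely often by a sequence is taken at some index preceded by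
   exactly t earlier occurrences, for every t: take the t-th index of occurrence. *)
lemma occurrence_with_count:
  fixes b :: "nat \<Rightarrow> 'a"
  assumes inf: "infinite {m. b m = x}"
  shows "\<exists>m. b m = x \<and> card {k. k < m \<and> b k = x} = t"
proof -
  define S where "S = {m. b m = x}"
  define m where "m = enumerate S t"
  have "{k. k < m \<and> b k = x} = enumerate S ` {..<t}"
  proof (intro equalityI subsetI)
    fix k assume "k \<in> {k. k < m \<and> b k = x}"
    then have "k \<in> S" "k < m" by (auto simp: S_def)
    then obtain i where "enumerate S i = k"
      using enumerate_Ex inf S_def by blast
    with \<open>k < m\<close> show "k \<in> enumerate S ` {..<t}"
      using inf by (auto simp: m_def S_def)
  next
    fix k assume "k \<in> enumerate S ` {..<t}"
    then show "k \<in> {k. k < m \<and> b k = x}"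
      using inf enumerate_in_set[of S] by (auto simp: m_def S_def)
  qed
  moreover have "inj_on (enumerate S) {..<t}"
    using inj_enumerate inf S_def by (metis inj_on_subset subset_UNIV)
  moreover have "b m = x"
    using enumerate_in_set inf by (auto simp: m_def S_def)
  ultimately show ?thesis
    by (metis card_image card_lessThan)
qed

lemma pderiv_linear_power_mult:
  fixes R :: "'a :: idom poly"
  shows "pderiv ([:-a, 1:] ^ Suc k * R) =
           [:-a, 1:] ^ k * (smult (of_nat (Suc k)) R + [:-a, 1:] * pderiv R)"
  unfolding pderiv_mult pderiv_power_Suc by (simp add: pderiv_pCons algebra_simps)

lemma poly_higher_pderiv_linear_power_below:
  fixes R :: "'a :: idom poly"
  assumes "s < k"
  shows "poly ((pderiv ^^ s) ([:-a, 1:] ^ k * R)) a = 0"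
  using assms
proof (induction s arbitrary: k R)
  case 0
  then show ?case by (cases k) auto
next
  case (Suc s)
  then obtain k' where k: "k = Suc k'" "s < k'"
    by (cases k) auto
  show ?case
    unfolding k(1) funpow_Suc_right comp_def pderiv_linear_power_mult using Suc.IH k(2) by blast
qed

lemma poly_higher_pderiv_linear_power_exact:
  fixes R :: "'a :: {idom, semiring_char_0} poly"
  shows "poly ((pderiv ^^ k) ([:-a, 1:] ^ k * R)) a = fact k * poly R a"
proof (induction k arbitrary: R)
  case (Suc k)
  show ?case
    unfolding funpow_Suc_right comp_def pderiv_linear_power_mult Suc.IH
    by (simp add: algebra_simps)
qed simp

lemma poly_higher_pderiv_below_order:
  fixes p :: "'a :: idom poly"
  assumes "s < order a p"
  shows "poly ((pderiv ^^ s) p) a = 0"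
proof -
  obtain R where "p = [:-a, 1:] ^ order a p * R"
    using order_1 by (rule dvdE)
  then show ?thesis
    using poly_higher_pderiv_linear_power_below[OF assms] by metis
qed

lemma poly_higher_pderiv_at_order:
  fixes p :: "'a :: {idom, semiring_char_0} poly"
  assumes "p \<noteq> 0"
  shows "poly ((pderiv ^^ order a p) p) a \<noteq> 0"
proof -
  obtain R where R: "p = [:-a, 1:] ^ order a p * R" "\<not> [:-a, 1:] dvd R"
    using order_decomp[OF assms] by blast
  then have "poly R a \<noteq> 0"
    by (simp add: poly_eq_0_iff_dvd)
  then show ?thesis
    by (subst R(1)) (simp add: poly_higher_pderiv_linear_power_exact)
qed

lemma order_prod_linear_factors:
  fixes b :: "nat \<Rightarrow> 'a :: idom"
  shows "order a (\<Prod>k<n. [:-b k, 1:]) = card {k. k < n \<and> b k = a}"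
proof (induction n)
  case 0
  then show ?case by (simp add: order_0I)
next
  case (Suc n)
  have "(\<Prod>k<n. [:-b k, 1:]) \<noteq> 0"
    by simp
  then have "(\<Prod>k<n. [:-b k, 1:]) * [:-b n, 1:] \<noteq> 0"
    by (metis mult_eq_0_iff pCons_eq_0_iff one_neq_zero)
  then have "order a (\<Prod>k<Suc n. [:-b k, 1:]) = order a (\<Prod>k<n. [:-b k, 1:]) + order a [:-b n, 1:]"
    unfolding prod.lessThan_Suc by (rule order_mult)
  also have "order a [:-b n, 1:] = (if b n = a then 1 else 0)"
    using order_power_n_n[of a 1] by (auto intro!: order_0I)
  also have "{k. k < Suc n \<and> b k = a} = {k. k < n \<and> b k = a} \<union> (if b n = a then {n} else {})"
    by (auto simp: less_Suc_eq)
  ultimately show ?case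
    using Suc.IH by (auto simp: card_insert_if)
qed

lemma Complex_in_gauss_rat:
  assumes "a \<in> \<rat>" "b \<in> \<rat>"
  shows "Complex a b \<in> gauss_rat"
proof -
  obtain ra rb where "a = of_rat ra" "b = of_rat rb"
    using assms Rats_cases by metis
  moreover have of_real_rat: "complex_of_real (of_rat r) = of_rat r" for r
    by (cases r) (simp add: of_rat_rat)
  ultimately have "Complex a b = of_rat ra + \<i> * of_rat rb"
    by (simp add: Complex_eq)
  then show ?thesis
    unfolding gauss_rat_def by blast
qed

lemma nonzero_rational_near:
  fixes x :: real
  assumes "\<epsilon> > 0"
  shows "\<exists>a\<in>\<rat>. a \<noteq> 0 \<and> \<bar>a - x\<bar> < \<epsilon>"
proof (cases "x \<ge> 0")
  case True
  then obtain a where "a \<in> \<rat>" "x < a" "a < x + \<epsilon>"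
    using Rats_dense_in_real[of x "x + \<epsilon>"] assms by auto
  with True show ?thesis by (intro bexI[of _ a]) auto
next
  case False
  then obtain a where "a \<in> \<rat>" "x - \<epsilon> < a" "a < x"
    using Rats_dense_in_real[of "x - \<epsilon>" x] assms by auto
  with False show ?thesis by (intro bexI[of _ a]) auto
qed

lemma gauss_rat_dense_nonzero:
  assumes "\<delta> > 0"
  shows "\<exists>q\<in>gauss_rat. q \<noteq> 0 \<and> norm (q - w) < \<delta>"
proof -
  obtain a where a: "a \<in> \<rat>" "a \<noteq> 0" "\<bar>a - Re w\<bar> < \<delta>/2"
    using nonzero_rational_near[of "\<delta>/2" "Re w"] assms by auto
  obtain b where b: "b \<in> \<rat>" "\<bar>b - Im w\<bar> < \<delta>/2"
    using Rats_dense_in_real[of "Im w" "Im w + \<delta>/2"] assms by auto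
  have "norm (Complex a b - w) \<le> \<bar>a - Re w\<bar> + \<bar>b - Im w\<bar>"
    using cmod_le[of "Complex a b - w"] by simp
  also have "\<dots> < \<delta>"
    using a(3) b(2) by simp
  finally have "norm (Complex a b - w) < \<delta>" .
  moreover have "Complex a b \<noteq> 0"
    using a(2) by (simp add: complex_eq_iff)
  ultimately show ?thesis
    using Complex_in_gauss_rat[OF a(1) b(1)] by blast
qed

definition coeff_majorant :: "'a :: real_normed_field poly \<Rightarrow> real \<Rightarrow> real" where
  "coeff_majorant p R = (\<Sum>i\<le>degree p. norm (coeff p i) * R ^ i)"

lemma norm_poly_le_coeff_majorant:
  fixes p :: "'a :: real_normed_field poly"
  assumes "norm z \<le> R"
  shows "norm (poly p z) \<le> coeff_majorant p R"
proof -
  have "norm (poly p z) \<le> (\<Sum>i\<le>degree p. norm (coeff p i) * norm z ^ i)"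
    unfolding poly_altdef by (rule order_trans[OF norm_sum]) (simp add: norm_mult norm_power)
  also have "\<dots> \<le> coeff_majorant p R"
    unfolding coeff_majorant_def using assms
    by (intro sum_mono mult_left_mono power_mono) auto
  finally show ?thesis .
qed

lemma coeff_majorant_nonneg: "R \<ge> 0 \<Longrightarrow> coeff_majorant p R \<ge> 0"
  unfolding coeff_majorant_def by (auto intro!: sum_nonneg)

lemma higher_deriv_poly: "(deriv ^^ s) (poly p) = poly ((pderiv ^^ s) (p :: complex poly))"
proof (induction s)
  case (Suc s)
  show ?case
    using poly_DERIV by (auto simp: Suc fun_eq_iff intro!: DERIV_imp_deriv)
qed simp

lemma recursive_choice:
  fixes P :: "(nat \<Rightarrow> 'a) \<Rightarrow> nat \<Rightarrow> 'a \<Rightarrow> bool"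
  assumes exists: "\<And>c m. \<exists>x. P c m x"
    and local: "\<And>c c' m x. (\<And>k. k < m \<Longrightarrow> c k = c' k) \<Longrightarrow> P c m x \<Longrightarrow> P c' m x"
  shows "\<exists>c. \<forall>m. P c m (c m)"
proof -
  define g where "g = rec_nat (\<lambda>_. undefined) (\<lambda>m h. h(m := SOME x. P h m x))"
  have g_Suc: "g (Suc m) = (g m)(m := SOME x. P (g m) m x)" for m
    by (simp add: g_def)
  have g_stable: "g (n + j) k = g n k" if "k < n" for n j k
    using that by (induction j) (auto simp: g_Suc)
  define c where "c k = g (Suc k) k" for k
  have "P c m (c m)" for m
  proof -
    have "P (g m) m (c m)"
      unfolding c_def g_Suc using someI_ex[OF exists] by simp
    moreover have "g m k = c k" if "k < m" for k
      using g_stable[of k "Suc k" "m - Suc k"] that by (simp add: c_def)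
    ultimately show ?thesis
      using local by blast
  qed
  then show ?thesis by blast
qed

definition poly_series :: "(nat \<Rightarrow> complex) \<Rightarrow> (nat \<Rightarrow> complex poly) \<Rightarrow> nat \<Rightarrow> complex \<Rightarrow> complex" where
  "poly_series c p s z = (\<Sum>n. c n * poly ((pderiv ^^ s) (p n)) z)"

lemma poly_series_has_derivative:
  fixes c :: "nat \<Rightarrow> complex" and p :: "nat \<Rightarrow> complex poly" and M :: "nat \<Rightarrow> real"
  assumes M: "summable M"
    and bound: "\<And>n s z. s \<le> n \<Longrightarrow> norm z \<le> real n \<Longrightarrow> norm (c n * poly ((pderiv ^^ s) (p n)) z) \<le> M n"
  shows "(poly_series c p s has_field_derivative poly_series c p (Suc s) z) (at z)"
proof -
  have uniform_bound: "eventually (\<lambda>n. \<forall>w\<in>ball 0 R. norm (c n * poly ((pderiv ^^ t) (p n)) w) \<le> M n) sequentially"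
    for R t
  proof -
    have "norm (c n * poly ((pderiv ^^ t) (p n)) w) \<le> M n"
      if n: "n \<ge> max t (nat \<lceil>R\<rceil>)" and w: "w \<in> ball 0 R" for n w
    proof (rule bound)
      show "t \<le> n"
        using n by simp
      have "norm w < R"
        using w by simp
      also have "R \<le> real n"
        using n by linarith
      finally show "norm w \<le> real n"
        by simp
    qed
    then show ?thesis
      unfolding eventually_sequentially by blast
  qed
  define S where "S = ball (0 :: complex) (norm z + 1)"
  have "((\<lambda>w. \<Sum>n. c n * poly ((pderiv ^^ s) (p n)) w) has_field_derivative
          (\<Sum>n. c n * poly ((pderiv ^^ Suc s) (p n)) z)) (at z)"
  proof (rule has_field_derivative_series'(2)[of S "\<lambda>n w. c n * poly ((pderiv ^^ s) (p n)) w"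
        "\<lambda>n w. c n * poly ((pderiv ^^ Suc s) (p n)) w" 0])
    have "0 < norm z + 1"
      by (metis add_nonneg_pos norm_ge_zero zero_less_one)
    then show "convex S" "0 \<in> S" "z \<in> interior S"
      by (auto simp: S_def)
    show "((\<lambda>w. c n * poly ((pderiv ^^ s) (p n)) w) has_field_derivative
            c n * poly ((pderiv ^^ Suc s) (p n)) w) (at w within S)" for n w
      by (auto intro!: derivative_eq_intros)
    show "uniformly_convergent_on S (\<lambda>n w. \<Sum>i<n. c i * poly ((pderiv ^^ Suc s) (p i)) w)"
      unfolding S_def by (rule Weierstrass_m_test'_ev[OF uniform_bound M])
    have "eventually (\<lambda>n. norm (c n * poly ((pderiv ^^ s) (p n)) 0) \<le> M n) sequentially"
      using uniform_bound[of 1 s] by eventually_elim simp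
    then show "summable (\<lambda>n. c n * poly ((pderiv ^^ s) (p n)) 0)"
      using M by (rule summable_comparison_test_ev)
  qed
  then show ?thesis
    by (simp add: poly_series_def [abs_def])
qed

lemma higher_pderiv_beyond_degree:
  assumes "degree p < n"
  shows "(pderiv ^^ n) p = 0"
  using assms by (intro poly_eqI) (simp add: coeff_higher_pderiv coeff_eq_0)

lemma not_poly_if_all_derivatives_nonzero:
  fixes f :: "complex \<Rightarrow> complex"
  assumes "\<And>s. \<exists>z. (deriv ^^ s) f z \<noteq> 0"
  shows "\<not> (\<exists>p. \<forall>z. f z = poly p z)"
proof
  assume "\<exists>p. \<forall>z. f z = poly p z"
  then obtain p where f: "f = poly p"
    by blast
  have "(deriv ^^ Suc (degree p)) f z = 0" for z
    unfolding f higher_deriv_poly higher_pderiv_beyond_degree[OF lessI] by simp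
  with assms[of "Suc (degree p)"] show False
    by blast
qed

context
  fixes c :: "nat \<Rightarrow> complex" and p :: "nat \<Rightarrow> complex poly" and M :: "nat \<Rightarrow> real"
  assumes summable_majorant: "summable M"
    and majorant: "\<And>n s z. s \<le> n \<Longrightarrow> norm z \<le> real n \<Longrightarrow> norm (c n * poly ((pderiv ^^ s) (p n)) z) \<le> M n"
begin

lemma higher_deriv_poly_series: "(deriv ^^ s) (poly_series c p 0) = poly_series c p s"
proof (induction s)
  case (Suc s)
  show ?case
    using poly_series_has_derivative[OF summable_majorant majorant]
    by (auto simp: Suc fun_eq_iff intro!: DERIV_imp_deriv)
qed simp

lemma poly_series_entire: "poly_series c p 0 holomorphic_on UNIV"
  using poly_series_has_derivative[OF summable_majorant majorant]
  unfolding holomorphic_on_def field_differentiable_def by blast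

end

(* The basis polynomial node_poly m vanishes at the
   earlier nodes to the orders already prescribed there, so adding c_m node_poly m leaves
   all earlier prescriptions intact, and lead_value m is its (nonzero) contribution to the
   new one. The coefficient c_m is then chosen small (relative to node_bound m, which
   dominates all relevant derivatives of node_poly m on the disc of radius m) such that the
   prescribed value lands in Q(i) - {0}. *)
context
  fixes b :: "nat \<Rightarrow> complex"
begin

definition node_poly :: "nat \<Rightarrow> complex poly" where
  "node_poly n = (\<Prod>k<n. [:-b k, 1:])"

(* Number of earlier occurrences of b_m: the order of the derivative prescribed at step m. *)
definition deriv_order :: "nat \<Rightarrow> nat" where
  "deriv_order m = card {k. k < m \<and> b k = b m}"

definition lead_value :: "nat \<Rightarrow> complex" where
  "lead_value m = poly ((pderiv ^^ deriv_order m) (node_poly m)) (b m)"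

definition prefix_value :: "(nat \<Rightarrow> complex) \<Rightarrow> nat \<Rightarrow> complex" where
  "prefix_value c m = (\<Sum>n<m. c n * poly ((pderiv ^^ deriv_order m) (node_poly n)) (b m))"

definition node_bound :: "nat \<Rightarrow> real" where
  "node_bound n = 1 + (\<Sum>s\<le>n. coeff_majorant ((pderiv ^^ s) (node_poly n)) (real n))"

definition admissible :: "(nat \<Rightarrow> complex) \<Rightarrow> nat \<Rightarrow> complex \<Rightarrow> bool" where
  "admissible c m x \<longleftrightarrow>
     prefix_value c m + x * lead_value m \<in> gauss_rat - {0} \<and> norm x \<le> (1/2) ^ m / node_bound m"

lemma node_poly_nonzero: "node_poly n \<noteq> 0"
  by (simp add: node_poly_def)

lemma order_node_poly: "order a (node_poly n) = card {k. k < n \<and> b k = a}"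
  unfolding node_poly_def by (rule order_prod_linear_factors)

(* node_poly m has a root of multiplicity exactly deriv_order m at b m. *)
lemma lead_value_nonzero: "lead_value m \<noteq> 0"
  using poly_higher_pderiv_at_order[OF node_poly_nonzero, of "b m" m]
  by (simp add: lead_value_def deriv_order_def order_node_poly)

lemma later_nodes_vanish:
  assumes "m < n"
  shows "poly ((pderiv ^^ deriv_order m) (node_poly n)) (b m) = 0"
proof (rule poly_higher_pderiv_below_order)
  have "insert m {k. k < m \<and> b k = b m} \<subseteq> {k. k < n \<and> b k = b m}"
    using assms by auto
  then have "card (insert m {k. k < m \<and> b k = b m}) \<le> card {k. k < n \<and> b k = b m}"
    by (intro card_mono) auto
  then show "deriv_order m < order (b m) (node_poly n)"
    by (simp add: deriv_order_def order_node_poly)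
qed

lemma node_bound_ge_1: "node_bound n \<ge> 1"
  unfolding node_bound_def by (auto intro!: sum_nonneg coeff_majorant_nonneg)

lemma norm_higher_pderiv_node_poly_le:
  assumes "s \<le> n" "norm z \<le> real n"
  shows "norm (poly ((pderiv ^^ s) (node_poly n)) z) \<le> node_bound n"
proof -
  have "norm (poly ((pderiv ^^ s) (node_poly n)) z) \<le> coeff_majorant ((pderiv ^^ s) (node_poly n)) (real n)"
    using assms(2) by (rule norm_poly_le_coeff_majorant)
  also have "\<dots> \<le> (\<Sum>s\<le>n. coeff_majorant ((pderiv ^^ s) (node_poly n)) (real n))"
    using assms(1) by (intro member_le_sum) (auto intro: coeff_majorant_nonneg)
  also have "\<dots> \<le> node_bound n"
    by (simp add: node_bound_def)
  finally show ?thesis .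
qed

lemma admissible_exists: "\<exists>x. admissible c m x"
proof -
  define \<delta> where "\<delta> = norm (lead_value m) * (1/2) ^ m / node_bound m"
  have "\<delta> > 0"
    unfolding \<delta>_def using lead_value_nonzero node_bound_ge_1[of m] by simp
  then obtain q where q: "q \<in> gauss_rat" "q \<noteq> 0" "norm (q - prefix_value c m) < \<delta>"
    using gauss_rat_dense_nonzero by blast
  define x where "x = (q - prefix_value c m) / lead_value m"
  have "prefix_value c m + x * lead_value m = q"
    using lead_value_nonzero by (simp add: x_def)
  moreover have "norm x \<le> (1/2) ^ m / node_bound m"
  proof -
    have "norm x = norm (q - prefix_value c m) / norm (lead_value m)"
      by (simp add: x_def norm_divide)
    also have "\<dots> \<le> \<delta> / norm (lead_value m)"
      using q(3) by (intro divide_right_mono) auto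
    also have "\<dots> = (1/2) ^ m / node_bound m"
      using lead_value_nonzero by (simp add: \<delta>_def)
    finally show ?thesis .
  qed
  ultimately show ?thesis
    using q unfolding admissible_def by auto
qed

(* Admissibility at step m only involves c_0, ..., c_(m-1), so a fully admissible
   sequence of coefficients can be chosen recursively. *)
lemma admissible_sequence_exists: "\<exists>c. \<forall>m. admissible c m (c m)"
proof (rule recursive_choice)
  show "\<exists>x. admissible c m x" for c m
    by (rule admissible_exists)
  show "admissible c' m x" if "\<And>k. k < m \<Longrightarrow> c k = c' k" "admissible c m x" for c c' m x
  proof -
    have "prefix_value c m = prefix_value c' m"
      unfolding prefix_value_def using that(1) by (intro sum.cong) auto
    with that(2) show ?thesis
      by (simp add: admissible_def)
  qed
qed

context
  fixes c :: "nat \<Rightarrow> complex"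
  assumes admissible_c: "\<And>m. admissible c m (c m)"
begin

lemma admissible_term_bound:
  assumes "s \<le> n" "norm z \<le> real n"
  shows "norm (c n * poly ((pderiv ^^ s) (node_poly n)) z) \<le> (1/2) ^ n"
proof -
  have "norm (c n * poly ((pderiv ^^ s) (node_poly n)) z) = norm (c n) * norm (poly ((pderiv ^^ s) (node_poly n)) z)"
    by (simp add: norm_mult)
  also have "\<dots> \<le> ((1/2) ^ n / node_bound n) * node_bound n"
    using admissible_c[of n] norm_higher_pderiv_node_poly_le[OF assms] node_bound_ge_1[of n]
    by (intro mult_mono) (auto simp: admissible_def)
  also have "\<dots> = (1/2) ^ n"
    using node_bound_ge_1[of n] by simp
  finally show ?thesis .
qed

(* At b m only the first m+1 terms contribute to the derivative of order deriv_order m. *)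
lemma poly_series_at_node: "poly_series c node_poly (deriv_order m) (b m) \<in> gauss_rat - {0}"
proof -
  have "poly_series c node_poly (deriv_order m) (b m) = (\<Sum>n<Suc m. c n * poly ((pderiv ^^ deriv_order m) (node_poly n)) (b m))"
    unfolding poly_series_def by (rule suminf_finite) (auto simp: later_nodes_vanish)
  also have "\<dots> = prefix_value c m + c m * lead_value m"
    by (simp add: prefix_value_def lead_value_def)
  finally show ?thesis
    using admissible_c[of m] by (simp add: admissible_def)
qed

end

lemma entire_with_prescribed_derivatives:
  "\<exists>F. F holomorphic_on UNIV \<and> (\<forall>m. (deriv ^^ deriv_order m) F (b m) \<in> gauss_rat - {0})"
proof -
  obtain c where c: "\<And>m. admissible c m (c m)"
    using admissible_sequence_exists by blast
  have geometric: "summable (\<lambda>n. (1/2 :: real) ^ n)"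
    by (rule summable_geometric) simp
  note majorant = admissible_term_bound[OF c]
  have "poly_series c node_poly 0 holomorphic_on UNIV"
    using geometric majorant by (rule poly_series_entire)
  moreover have "(deriv ^^ deriv_order m) (poly_series c node_poly 0) (b m) \<in> gauss_rat - {0}" for m
    using higher_deriv_poly_series[OF geometric majorant] poly_series_at_node[OF c] by simp
  ultimately show ?thesis
    by blast
qed

end

theorem corollary3:
  shows "\<exists>f. transcendental_entire f \<and>
           (\<forall>s::nat. (deriv ^^ s) f ` {z. algebraic z} \<subseteq> gauss_rat)"
proof -
  obtain b :: "nat \<Rightarrow> complex" where b: "\<forall>x\<in>{z. algebraic z}. infinite {m. b m = x}"
    using infinitely_repeating_enumeration[OF countable_algebraic] by blast
  have hit: "\<exists>m. b m = z \<and> deriv_order b m = s" if "algebraic z" for z s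
    using occurrence_with_count[of b z s] b that by (auto simp: deriv_order_def)
  obtain F where entire: "F holomorphic_on UNIV"
    and prescribed: "\<And>m. (deriv ^^ deriv_order b m) F (b m) \<in> gauss_rat - {0}"
    using entire_with_prescribed_derivatives[of b] by blast
  have "\<not> (\<exists>p. \<forall>z. F z = poly p z)"
  proof (rule not_poly_if_all_derivatives_nonzero)
    fix s
    obtain m where "b m = 0" "deriv_order b m = s"
      using hit[OF algebraic_0] by blast
    then show "\<exists>z. (deriv ^^ s) F z \<noteq> 0"
      using prescribed[of m] by auto
  qed
  moreover have "(deriv ^^ s) F z \<in> gauss_rat" if "algebraic z" for s z
    using hit[OF that, of s] prescribed by auto
  ultimately show ?thesis
    using entire unfolding transcendental_entire_def by blast
qed

end
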